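(* Let $K\subset\mathbb{R}^d$ be an OU set about $x_0\in\mathbb{R}^d$ (in the sense of sets in $\mathbb{R}^d$). Then $K$ is Lebesgue measurable, $\bar K$ and $\overline{K^\circ}$ are OU sets about $x_0$, and $\lambda(K^\circ)=\lambda(K)=\lambda(\bar K)$.
   Context: A set $K\subset\mathbb{R}^d$ is OU about $x_0=(x_{10},\dots,x_{d0})$ if for every $x\in K$ the closed rectangle with edges parallel to the axes and opposite vertices $x_0$ and $x$ lies in $K$, i.e. $(\eta_1x_1+(1-\eta_1)x_{10},\dots,\eta_dx_d+(1-\eta_d)x_{d0})\in K$ for all $\eta_i\in[0,1]$. $\lambda$ is Lebesgue measure; $K^\circ$, $\bar K$ denote interior and closure. *)

theory Defs
  imports "HOL-Analysis.Analysis"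
begin

text \<open>K is OU about x0: for every x in K, the closed axis-parallel box with
opposite vertices x0 and x lies in K.\<close>
definition OU_about :: "(real ^ 'd) set \<Rightarrow> real ^ 'd \<Rightarrow> bool" where
  "OU_about K x0 \<longleftrightarrow>
     (\<forall>x\<in>K. \<forall>\<eta> :: 'd \<Rightarrow> real. (\<forall>i. 0 \<le> \<eta> i \<and> \<eta> i \<le> 1) \<longrightarrow>
        (\<chi> i. \<eta> i * x $ i + (1 - \<eta> i) * x0 $ i) \<in> K)"

end

theory Submission
  imports Defs
begin

text \<open>Taking limits, the open box spanned by \<open>x0\<close> and any point \<open>y\<close> of
the closure already lies in the interior. Hence the homothety with centre \<open>x0\<close> and ratio
\<open>t < 1\<close> maps the closure (off the null set of points sharing a coordinate with \<open>x0\<close>) into the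
interior; locally this gives \<open>t^d \<lambda>(closure) \<le> \<lambda>(interior)\<close>, and \<open>t \<rightarrow> 1\<close> shows that the
frontier is negligible.\<close>

lemma mem_cbox_inf_sup_cart:
  fixes a b w :: "real ^ 'd"
  shows "w \<in> cbox (inf a b) (sup a b) \<longleftrightarrow> (\<forall>i. min (a$i) (b$i) \<le> w$i \<and> w$i \<le> max (a$i) (b$i))"
    and "w \<in> box (inf a b) (sup a b) \<longleftrightarrow> (\<forall>i. min (a$i) (b$i) < w$i \<and> w$i < max (a$i) (b$i))"
  by (simp_all add: mem_box_cart inf_vec_def sup_vec_def inf_min sup_max)

lemma OU_combination_mem_cbox:
  fixes x0 z :: "real ^ 'd"
  assumes "\<forall>i. 0 \<le> \<eta> i \<and> \<eta> i \<le> 1"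
  shows "(\<chi> i. \<eta> i * z $ i + (1 - \<eta> i) * x0 $ i) \<in> cbox (inf x0 z) (sup x0 z)"
  unfolding mem_cbox_inf_sup_cart
proof
  fix i
  have "\<eta> i * z $ i + (1 - \<eta> i) * x0 $ i \<in> closed_segment (x0$i) (z$i)"
    using assms unfolding closed_segment_def by (intro CollectI exI[of _ "\<eta> i"]) (auto simp: algebra_simps)
  then show "min (x0$i) (z$i) \<le> (\<chi> i. \<eta> i * z $ i + (1 - \<eta> i) * x0 $ i) $ i \<and>
      (\<chi> i. \<eta> i * z $ i + (1 - \<eta> i) * x0 $ i) $ i \<le> max (x0$i) (z$i)"
    by (simp add: closed_segment_eq_real_ivl min_def max_def split: if_splits)
qed

lemma OU_about_iff_cbox:
  fixes K :: "(real ^ 'd) set"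
  shows "OU_about K x0 \<longleftrightarrow> (\<forall>z\<in>K. cbox (inf x0 z) (sup x0 z) \<subseteq> K)"
proof
  assume OU: "OU_about K x0"
  show "\<forall>z\<in>K. cbox (inf x0 z) (sup x0 z) \<subseteq> K"
  proof (intro ballI subsetI)
    fix z w assume z: "z \<in> K" and w: "w \<in> cbox (inf x0 z) (sup x0 z)"
    have wi: "min (x0$i) (z$i) \<le> w$i \<and> w$i \<le> max (x0$i) (z$i)" for i
      using w by (simp add: mem_cbox_inf_sup_cart)
    define \<eta> where "\<eta> i = (if z$i = x0$i then 0 else (w$i - x0$i) / (z$i - x0$i))" for i
    have "0 \<le> \<eta> i \<and> \<eta> i \<le> 1" for i
      using wi[of i] by (auto simp: \<eta>_def divide_simps min_def max_def split: if_splits)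
    moreover have "(\<chi> i. \<eta> i * z $ i + (1 - \<eta> i) * x0 $ i) = w"
    proof (rule vec_eq_iff[THEN iffD2, rule_format])
      fix i
      show "(\<chi> i. \<eta> i * z $ i + (1 - \<eta> i) * x0 $ i) $ i = w $ i"
        using wi[of i] by (auto simp: \<eta>_def field_simps)
    qed
    ultimately show "w \<in> K"
      using OU z unfolding OU_about_def by metis
  qed
next
  assume box: "\<forall>z\<in>K. cbox (inf x0 z) (sup x0 z) \<subseteq> K"
  show "OU_about K x0"
    unfolding OU_about_def
  proof (intro ballI allI impI)
    fix z and \<eta> :: "'d \<Rightarrow> real"
    assume "z \<in> K" and "\<forall>i. 0 \<le> \<eta> i \<and> \<eta> i \<le> 1"
    then show "(\<chi> i. \<eta> i * z $ i + (1 - \<eta> i) * x0 $ i) \<in> K"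
      using box OU_combination_mem_cbox by blast
  qed
qed

lemma OU_about_closureI:
  fixes A :: "(real ^ 'd) set"
  assumes "\<And>z. z \<in> A \<Longrightarrow> cbox (inf x0 z) (sup x0 z) \<subseteq> closure A"
  shows "OU_about (closure A) x0"
  unfolding OU_about_def
proof (intro ballI allI impI)
  fix x and \<eta> :: "'d \<Rightarrow> real"
  assume x: "x \<in> closure A" and \<eta>: "\<forall>i. 0 \<le> \<eta> i \<and> \<eta> i \<le> 1"
  let ?f = "\<lambda>x::real^'d. (\<chi> i. \<eta> i * x $ i + (1 - \<eta> i) * x0 $ i)"
  have "?f z \<in> closure A" if "z \<in> A" for z
    using OU_combination_mem_cbox[OF \<eta>] assms[OF that] by blast
  then have "?f ` closure A \<subseteq> closure A"
    by (intro image_closure_subset) (auto intro!: continuous_intros)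
  with x show "?f x \<in> closure A" by blast
qed

lemma OU_about_closure:
  fixes K :: "(real ^ 'd) set"
  assumes "OU_about K x0"
  shows "OU_about (closure K) x0"
  using assms closure_subset by (intro OU_about_closureI) (auto simp: OU_about_iff_cbox)

lemma OU_about_box_subset_interior:
  fixes K :: "(real ^ 'd) set"
  assumes OU: "OU_about K x0" and x: "x \<in> closure K"
  shows "box (inf x0 x) (sup x0 x) \<subseteq> interior K"
proof (rule interior_maximal[OF _ open_box], rule subsetI)
  fix w assume "w \<in> box (inf x0 x) (sup x0 x)"
  then have w: "min (x0$i) (x$i) < w$i \<and> w$i < max (x0$i) (x$i)" for i
    by (simp add: mem_cbox_inf_sup_cart)
  define U where "U = (\<Inter>i. if x0$i < w$i then {z. w$i < z$i} else {z. z$i < w$i})"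
  have U: "open U"
    unfolding U_def
    by (intro open_INT) (auto intro: open_halfspace_component_lt_cart open_halfspace_component_gt_cart)
  have "x \<in> U"
    unfolding U_def
  proof
    fix i
    show "x \<in> (if x0$i < w$i then {z. w$i < z$i} else {z. z$i < w$i})"
      using w[of i] by (auto simp: min_def max_def split: if_splits)
  qed
  with x have "U \<inter> closure K \<noteq> {}"
    by blast
  then obtain z where z: "z \<in> K" "z \<in> U"
    using open_Int_closure_eq_empty[OF U] by blast
  have "w \<in> cbox (inf x0 z) (sup x0 z)"
    unfolding mem_cbox_inf_sup_cart
  proof
    fix i
    have "z \<in> (if x0$i < w$i then {z. w$i < z$i} else {z. z$i < w$i})"
      using z(2) unfolding U_def by blast
    then show "min (x0$i) (z$i) \<le> w$i \<and> w$i \<le> max (x0$i) (z$i)"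
      by (auto split: if_splits)
  qed
  with OU z(1) show "w \<in> K"
    unfolding OU_about_iff_cbox by blast
qed

lemma OU_about_cbox_subset_closure_interior:
  fixes K :: "(real ^ 'd) set"
  assumes OU: "OU_about K x0" and x: "x \<in> closure K" and ne: "\<And>i. x$i \<noteq> x0$i"
  shows "cbox (inf x0 x) (sup x0 x) \<subseteq> closure (interior K)"
proof -
  have "(1/2) *\<^sub>R (x0 + x) \<in> box (inf x0 x) (sup x0 x)"
    unfolding mem_cbox_inf_sup_cart
  proof
    fix i
    show "min (x0$i) (x$i) < ((1/2) *\<^sub>R (x0 + x))$i \<and> ((1/2) *\<^sub>R (x0 + x))$i < max (x0$i) (x$i)"
      using ne[of i] by (auto simp: min_def max_def)
  qed
  then have "closure (box (inf x0 x) (sup x0 x)) = cbox (inf x0 x) (sup x0 x)"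
    by (intro closure_box) blast
  then show ?thesis
    using closure_mono[OF OU_about_box_subset_interior[OF OU x]] by simp
qed

lemma OU_about_closure_interior:
  fixes K :: "(real ^ 'd) set"
  assumes OU: "OU_about K x0"
  shows "OU_about (closure (interior K)) x0"
proof (rule OU_about_closureI)
  fix x assume "x \<in> interior K"
  then obtain r where r: "r > 0" "ball x r \<subseteq> K"
    using mem_interior by blast
  \<comment> \<open>Push \<open>x\<close> away from \<open>x0\<close> in every coordinate, so that its box becomes nondegenerate.\<close>
  define s :: "real^'d" where "s = (\<chi> i. if x0$i \<le> x$i then 1 else -1)"
  have "s \<noteq> 0"
    by (auto simp: s_def vec_eq_iff)
  define c where "c = r / (2 * norm s)"
  have c: "c > 0"
    using r \<open>s \<noteq> 0\<close> by (simp add: c_def)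
  define x' where "x' = x + c *\<^sub>R s"
  have "dist x x' < r"
    using r \<open>s \<noteq> 0\<close> by (simp add: x'_def dist_norm c_def)
  then have "x' \<in> K"
    using r(2) by auto
  then have x'K: "x' \<in> closure K"
    using closure_subset by blast
  have x': "x'$i = (if x0$i \<le> x$i then x$i + c else x$i - c)" for i
    by (simp add: x'_def s_def)
  have "x'$i \<noteq> x0$i" for i
    using c x' by auto
  moreover have "cbox (inf x0 x) (sup x0 x) \<subseteq> cbox (inf x0 x') (sup x0 x')"
  proof
    fix w assume "w \<in> cbox (inf x0 x) (sup x0 x)"
    then have "min (x0$i) (x$i) \<le> w$i \<and> w$i \<le> max (x0$i) (x$i)" for i
      by (simp add: mem_cbox_inf_sup_cart)
    then show "w \<in> cbox (inf x0 x') (sup x0 x')"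
      unfolding mem_cbox_inf_sup_cart using c x' by (smt (verit))
  qed
  ultimately show "cbox (inf x0 x) (sup x0 x) \<subseteq> closure (interior K)"
    using OU_about_cbox_subset_closure_interior[OF OU x'K] by blast
qed

lemma OU_about_homothety_mem_interior:
  fixes K :: "(real ^ 'd) set"
  assumes OU: "OU_about K x0" and y: "y \<in> closure K" and ne: "\<And>i. y$i \<noteq> x0$i"
    and t: "0 < t" "t < 1"
  shows "t *\<^sub>R y + (1 - t) *\<^sub>R x0 \<in> interior K"
proof -
  have "t *\<^sub>R y + (1 - t) *\<^sub>R x0 \<in> box (inf x0 y) (sup x0 y)"
    unfolding mem_cbox_inf_sup_cart
  proof
    fix i
    have "(t *\<^sub>R y + (1 - t) *\<^sub>R x0)$i \<in> open_segment (x0$i) (y$i)"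
      using t ne[of i] unfolding in_segment(2) by (intro conjI exI[of _ t]) (auto simp: algebra_simps)
    then show "min (x0$i) (y$i) < (t *\<^sub>R y + (1 - t) *\<^sub>R x0)$i \<and>
        (t *\<^sub>R y + (1 - t) *\<^sub>R x0)$i < max (x0$i) (y$i)"
      by (auto simp: open_segment_eq_real_ivl min_def max_def split: if_splits)
  qed
  then show ?thesis
    using OU_about_box_subset_interior[OF OU y] by blast
qed

lemma measure_le_if_homothetic_images_subset:
  fixes S T :: "'a::euclidean_space set"
  assumes S: "S \<in> lmeasurable" and T: "T \<in> lmeasurable"
    and sub: "\<And>t. 0 < t \<Longrightarrow> t < 1 \<Longrightarrow> (\<lambda>y. t *\<^sub>R y + (1 - t) *\<^sub>R c) ` S \<subseteq> T"
  shows "measure lebesgue S \<le> measure lebesgue T"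
proof -
  have scaled: "t ^ DIM('a) * measure lebesgue S \<le> measure lebesgue T" if t: "0 < t" "t < 1" for t
  proof -
    have "ennreal (t ^ DIM('a) * measure lebesgue S)
        = emeasure lebesgue ((\<lambda>y. t *\<^sub>R y + (1 - t) *\<^sub>R c) ` S)"
      using S t by (simp add: emeasure_lebesgue_affine emeasure_eq_measure2 ennreal_mult'' ennreal_power)
    also have "\<dots> \<le> emeasure lebesgue T"
      using T by (intro emeasure_mono[OF sub[OF t]]) auto
    also have "\<dots> = ennreal (measure lebesgue T)"
      using T by (simp add: emeasure_eq_measure2)
    finally show ?thesis
      by (simp add: ennreal_le_iff)
  qed
  have "((\<lambda>t. t ^ DIM('a) * measure lebesgue S) \<longlongrightarrow> 1 ^ DIM('a) * measure lebesgue S) (at_left 1)"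
    by (intro tendsto_intros)
  moreover have "eventually (\<lambda>t. t \<in> {0<..<1}) (at_left (1::real))"
    by (rule eventually_at_left_real) simp
  then have "eventually (\<lambda>t. t ^ DIM('a) * measure lebesgue S \<le> measure lebesgue T) (at_left 1)"
    by eventually_elim (use scaled in auto)
  ultimately show ?thesis
    by (intro tendsto_le[OF _ tendsto_const]) auto
qed

lemma negligible_coordinate_hyperplane: "negligible {x::real^'d. x$i = c}"
proof -
  have "negligible {x::real^'d. x \<bullet> axis i 1 = c}"
    by (rule negligible_standard_hyperplane) simp
  then show ?thesis
    by (simp add: cart_eq_inner_axis)
qed

lemma OU_about_negligible_frontier_Int_ball:
  fixes K :: "(real ^ 'd) set"
  assumes OU: "OU_about K x0"
  shows "negligible (frontier K \<inter> ball x0 r)"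
proof -
  define H where "H = (\<Union>i. {x::real^'d. x$i = x0$i})"
  define C where "C = closure K \<inter> ball x0 r"
  define I where "I = interior K \<inter> ball x0 r"
  have H: "H \<in> null_sets lebesgue"
    unfolding H_def negligible_iff_null_sets[symmetric]
    by (intro negligible_Union) (auto intro: negligible_coordinate_hyperplane)
  have C: "C \<in> lmeasurable"
    unfolding C_def
    by (intro bounded_set_imp_lmeasurable sets.Int sets_completionI_sets lborelD borel_closed borel_open)
      auto
  have I: "I \<in> lmeasurable"
    unfolding I_def by (intro lmeasurable_open) auto
  have "(\<lambda>y. t *\<^sub>R y + (1 - t) *\<^sub>R x0) ` (C - H) \<subseteq> I" if t: "0 < t" "t < 1" for t
  proof (rule image_subsetI)
    fix y assume "y \<in> C - H"
    then have y: "y \<in> closure K" "dist x0 y < r" "\<And>i. y$i \<noteq> x0$i"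
      by (auto simp: C_def H_def)
    let ?w = "t *\<^sub>R y + (1 - t) *\<^sub>R x0"
    have "?w \<in> interior K"
      using OU_about_homothety_mem_interior[OF OU y(1) y(3) t] .
    moreover have "dist x0 ?w = t * dist x0 y"
    proof -
      have "x0 - ?w = t *\<^sub>R (x0 - y)"
        by (simp add: algebra_simps)
      then show ?thesis
        using t by (simp add: dist_norm)
    qed
    then have "dist x0 ?w < r"
      using t y(2) by (smt (verit) mult_left_le_one_le zero_le_dist)
    ultimately show "?w \<in> I"
      by (simp add: I_def)
  qed
  then have "measure lebesgue (C - H) \<le> measure lebesgue I"
    using C H I by (intro measure_le_if_homothetic_images_subset fmeasurable_Diff) auto
  moreover have "measure lebesgue (C - H) = measure lebesgue C"
    using C H by (simp add: measure_Diff_null_set)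
  moreover have "I \<subseteq> C"
    using interior_subset closure_subset by (auto simp: I_def C_def)
  ultimately have "measure lebesgue (C - I) = 0"
    using C I measurable_measure_Diff[of C lebesgue I] measure_mono_fmeasurable[of I C lebesgue]
    by (simp add: fmeasurableD)
  moreover have "frontier K \<inter> ball x0 r = C - I"
    by (auto simp: frontier_def C_def I_def)
  ultimately show ?thesis
    using C I by (simp add: negligible_iff_measure0 fmeasurable_Diff)
qed

lemma OU_about_negligible_frontier:
  fixes K :: "(real ^ 'd) set"
  assumes "OU_about K x0"
  shows "negligible (frontier K)"
proof (rule negligible_on_intervals[THEN iffD2], intro allI)
  fix a b :: "real ^ 'd"
  obtain r where "cbox a b \<subseteq> ball x0 r"
    using bounded_subset_ballD[OF bounded_cbox] by blast
  then have "frontier K \<inter> cbox a b \<subseteq> frontier K \<inter> ball x0 r"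
    by blast
  then show "negligible (frontier K \<inter> cbox a b)"
    by (rule negligible_subset[OF OU_about_negligible_frontier_Int_ball[OF assms]])
qed

lemma sets_lebesgue_if_negligible_frontier:
  fixes S :: "'a::euclidean_space set"
  assumes "negligible (frontier S)"
  shows "S \<in> sets lebesgue"
proof -
  have "S - interior S \<subseteq> frontier S"
    using closure_subset by (auto simp: frontier_def)
  then have "S - interior S \<in> sets lebesgue"
    using assms negligible_subset negligible_imp_sets by blast
  moreover have "interior S \<in> sets lebesgue"
    by (intro sets_completionI_sets lborelD borel_open) simp
  ultimately have "interior S \<union> (S - interior S) \<in> sets lebesgue"
    by blast
  then show ?thesis
    by (simp add: Un_absorb1 interior_subset)
qed

lemma emeasure_interior_eq_closure_if_negligible_frontier:
  fixes S :: "'a::euclidean_space set"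
  assumes "negligible (frontier S)"
  shows "emeasure lebesgue (interior S) = emeasure lebesgue (closure S)"
proof -
  have "closure S = interior S \<union> frontier S"
    using interior_subset closure_subset by (auto simp: frontier_def)
  then show ?thesis
    using assms by (simp add: emeasure_Un_null_set sets_completionI_sets borel_open negligible_iff_null_sets)
qed

theorem mainTheorem11:
  fixes K :: "(real ^ 'd) set" and x0 :: "real ^ 'd"
  assumes "OU_about K x0"
  shows "K \<in> sets lebesgue \<and> OU_about (closure K) x0 \<and> OU_about (closure (interior K)) x0 \<and>
         emeasure lebesgue (interior K) = emeasure lebesgue K \<and>
         emeasure lebesgue K = emeasure lebesgue (closure K)"
proof -
  have frontier: "negligible (frontier K)"
    using OU_about_negligible_frontier[OF assms] .
  then have K: "K \<in> sets lebesgue"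
    by (rule sets_lebesgue_if_negligible_frontier)
  have "emeasure lebesgue (interior K) \<le> emeasure lebesgue K"
    using K interior_subset by (rule emeasure_mono[rotated])
  moreover have "emeasure lebesgue K \<le> emeasure lebesgue (closure K)"
    by (intro emeasure_mono closure_subset sets_completionI_sets lborelD borel_closed) simp
  ultimately show ?thesis
    using K OU_about_closure[OF assms] OU_about_closure_interior[OF assms]
      emeasure_interior_eq_closure_if_negligible_frontier[OF frontier]
    by (metis order_antisym)
qed

end
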